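(* There is a constant $c_1>0$ such that for all $n>5$, $$h_3(n,\{(4,0),(4,3)\}) > c_1\, n^{1/3}.$$ That is, every $n$-vertex $3$-graph in which every four vertices span $1$, $2$ or $4$ edges has a clique or coclique of size greater than $c_1 n^{1/3}$.
   Context: For an $r$-uniform hypergraph ($r$-graph) $H$, a homogeneous set is a set of vertices that is either a clique (every $r$-subset is an edge) or a coclique (no $r$-subset is an edge); $h(H)$ denotes the size of a largest homogeneous set. An $(m,f)$-graph is an $r$-graph with $m$ vertices and $f$ edges; $H$ is $(m,f)$-free if it contains no induced sub-hypergraph that is an $(m,f)$-graph. For a set $Q$ of pairs $(m,f)$, $H$ is $Q$-free if it is $(m,f)$-free for every $(m,f)\in Q$. $h_r(n,Q)$ is the minimum of $h(H)$ over all $n$-vertex $Q$-free $r$-graphs $H$. *)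

theory Defs
  imports "HOL-Analysis.Analysis"
begin

definition uniform_hypergraph :: "nat \<Rightarrow> 'a set \<Rightarrow> 'a set set \<Rightarrow> bool" where
  "uniform_hypergraph r V E \<longleftrightarrow> finite V \<and> (\<forall>e\<in>E. e \<subseteq> V \<and> card e = r)"

definition homogeneous :: "nat \<Rightarrow> 'a set set \<Rightarrow> 'a set \<Rightarrow> bool" where
  "homogeneous r E S \<longleftrightarrow>
     (\<forall>e. e \<subseteq> S \<and> card e = r \<longrightarrow> e \<in> E) \<or> (\<forall>e. e \<subseteq> S \<and> card e = r \<longrightarrow> e \<notin> E)"

definition hom_number :: "nat \<Rightarrow> 'a set \<Rightarrow> 'a set set \<Rightarrow> nat" where
  "hom_number r V E = Max {card S | S. S \<subseteq> V \<and> homogeneous r E S}"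

definition mf_free :: "'a set \<Rightarrow> 'a set set \<Rightarrow> nat \<Rightarrow> nat \<Rightarrow> bool" where
  "mf_free V E m f \<longleftrightarrow> \<not> (\<exists>S. S \<subseteq> V \<and> card S = m \<and> card {e \<in> E. e \<subseteq> S} = f)"

definition Q_free :: "'a set \<Rightarrow> 'a set set \<Rightarrow> (nat \<times> nat) set \<Rightarrow> bool" where
  "Q_free V E Q \<longleftrightarrow> (\<forall>(m, f) \<in> Q. mf_free V E m f)"

text \<open>h_r(n,Q): minimum of h(H) over n-vertex Q-free r-graphs (vertex set {0..<n},
  which loses no generality since all notions are isomorphism invariant).\<close>
definition h_num :: "nat \<Rightarrow> nat \<Rightarrow> (nat \<times> nat) set \<Rightarrow> nat" where
  "h_num r n Q = Min {hom_number r {..<n} E | E.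
       uniform_hypergraph r {..<n} E \<and> Q_free {..<n} E Q}"

end

theory Submission
  imports Defs
begin

text \<open>Let h be the size of a largest homogeneous set. Four vertices spanning three edges span
  the fourth, so a clique of the link graph of a vertex p together with p is a clique: link
  cliques have fewer than h vertices. Fix two vertices a, b and let Y be the set of v with abv a
  non-edge. Every four vertices span an edge, so on Y every pair lies in the link of a or of b;
  lying in both is an equivalence, whose classes are link cliques. On a set of class
  representatives the link of b is the complement of the link of a, an edge is a triangle on
  which the link of a is constant, and this forbids the link of a from containing an induced
  2K2, P4 or C4. Hence it is a threshold graph, i.e. a clique plus an independent set, so there
  are at most 2h representatives and |Y| \<le> 2h^2. Thus in the link of a fixed vertex every
  vertex is non-adjacent to at most 2h^2 others, a greedy argument yields a link clique of
  size (n - 1)/(2h^2 + 1), and n \<le> 2h^3.\<close>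

lemma card3_subset_of_card4:
  assumes "e \<subseteq> {a,b,c,d}" "card e = 3" "distinct [a,b,c,d]"
  shows "e = {a,b,c} \<or> e = {a,b,d} \<or> e = {a,c,d} \<or> e = {b,c,d}"
proof -
  have card4: "card {a,b,c,d} = 4" using assms(3) by auto
  have "finite e" using assms(2) card.infinite by fastforce
  have "\<not> {a,b,c,d} \<subseteq> e"
  proof
    assume "{a,b,c,d} \<subseteq> e"
    then have "card {a,b,c,d} \<le> card e" using card_mono[OF \<open>finite e\<close>] by blast
    then show False using card4 assms(2) by simp
  qed
  then obtain w where w: "w \<in> {a,b,c,d}" "w \<notin> e" by blast
  have "e \<subseteq> {a,b,c,d} - {w}" using w assms(1) by blast
  moreover have "card ({a,b,c,d} - {w}) = card e" using card4 w(1) assms(2) by simp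
  ultimately have "e = {a,b,c,d} - {w}" by (intro card_subset_eq) auto
  moreover have "{a,b,c,d} - {a} = {b,c,d}" "{a,b,c,d} - {b} = {a,c,d}"
     "{a,b,c,d} - {c} = {a,b,d}" "{a,b,c,d} - {d} = {a,b,c}"
    using assms(3) by auto
  ultimately show ?thesis using w(1) by auto
qed

lemma class_representatives:
  fixes Y :: "'a::linorder set" and R :: "'a \<Rightarrow> 'a \<Rightarrow> bool"
  assumes "finite Y" and sym: "\<And>u v. R u v \<Longrightarrow> R v u"
    and trans: "\<And>u v w. u \<in> Y \<Longrightarrow> v \<in> Y \<Longrightarrow> w \<in> Y \<Longrightarrow> distinct [u,v,w] \<Longrightarrow>
      R u v \<Longrightarrow> R u w \<Longrightarrow> R v w"
  shows "\<exists>T\<subseteq>Y. Y \<subseteq> (\<Union>t\<in>T. {z \<in> Y. z = t \<or> R t z}) \<and>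
    (\<forall>u\<in>T. \<forall>v\<in>T. u \<noteq> v \<longrightarrow> \<not> R u v)"
proof -
  define cls where "cls t = {z \<in> Y. z = t \<or> R t z}" for t
  define T where "T = {t \<in> Y. \<forall>z \<in> Y. R t z \<longrightarrow> t \<le> z}"
  have closed: "z \<in> cls y" if "y \<in> Y" "r \<in> cls y" "z \<in> Y" "R r z" for y r z
  proof (cases "distinct [r,y,z]")
    case True
    then have "R r y" using that(2) sym by (simp add: cls_def)
    then show ?thesis using trans[of r y z] True that by (simp add: cls_def)
  qed (use that in \<open>auto simp: cls_def\<close>)
  have "T \<subseteq> Y" by (auto simp: T_def)
  moreover have "Y \<subseteq> (\<Union>t\<in>T. cls t)"
  proof
    fix y assume y: "y \<in> Y"
    have fin: "finite (cls y)" using \<open>finite Y\<close> by (simp add: cls_def)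
    have ne: "y \<in> cls y" using y by (simp add: cls_def)
    define r where "r = Min (cls y)"
    have r: "r \<in> cls y" unfolding r_def using Min_in[OF fin] ne by blast
    have "r \<le> z" if "z \<in> Y" "R r z" for z
      unfolding r_def using Min_le[OF fin closed[OF y r that]] .
    then have "r \<in> T" using r by (simp add: T_def cls_def)
    moreover have "y \<in> cls r" using r y sym by (auto simp: cls_def)
    ultimately show "y \<in> (\<Union>t\<in>T. cls t)" by blast
  qed
  moreover have "\<not> R u v" if "u \<in> T" "v \<in> T" "u \<noteq> v" for u v
  proof
    assume "R u v"
    then have "u \<le> v" "v \<le> u" using that sym by (simp_all add: T_def)
    then show False using \<open>u \<noteq> v\<close> by simp
  qed
  ultimately show ?thesis unfolding cls_def by blast
qed

lemma no_alternating_4cycle_imp_nested: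
  fixes V :: "'a set" and G :: "'a \<Rightarrow> 'a \<Rightarrow> bool"
  defines "nbhd u \<equiv> {z \<in> V. z \<noteq> u \<and> G u z}"
  assumes no_alt: "\<And>u v x y. u \<in> V \<Longrightarrow> v \<in> V \<Longrightarrow> x \<in> V \<Longrightarrow> y \<in> V \<Longrightarrow>
      distinct [u,v,x,y] \<Longrightarrow> G u x \<Longrightarrow> G v y \<Longrightarrow> \<not> G v x \<Longrightarrow> \<not> G u y \<Longrightarrow> False"
    and "u \<in> V" "v \<in> V" "u \<noteq> v"
  shows "nbhd u - {v} \<subseteq> nbhd v - {u} \<or> nbhd v - {u} \<subseteq> nbhd u - {v}"
proof (rule ccontr)
  assume "\<not> ?thesis"
  then obtain x y where x: "x \<in> nbhd u - {v}" "x \<notin> nbhd v - {u}"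
    and y: "y \<in> nbhd v - {u}" "y \<notin> nbhd u - {v}"
    by blast
  have "x \<in> V" "y \<in> V" "G u x" "G v y" "\<not> G v x" "\<not> G u y"
    using x y by (auto simp: nbhd_def)
  moreover have "distinct [u,v,x,y]"
    using x y \<open>u \<noteq> v\<close> \<open>G u x\<close> \<open>\<not> G u y\<close> by (auto simp: nbhd_def)
  ultimately show False using no_alt[of u v x y] assms(3,4) by blast
qed

lemma nested_nbhds_imp_split:
  fixes V :: "'a set" and G :: "'a \<Rightarrow> 'a \<Rightarrow> bool"
  defines "nbhd u \<equiv> {z \<in> V. z \<noteq> u \<and> G u z}"
  assumes sym: "\<And>u v. G u v = G v u"
    and nested: "\<And>u v. u \<in> V \<Longrightarrow> v \<in> V \<Longrightarrow> u \<noteq> v \<Longrightarrow>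
      nbhd u - {v} \<subseteq> nbhd v - {u} \<or> nbhd v - {u} \<subseteq> nbhd u - {v}"
  shows "\<exists>K\<subseteq>V. (\<forall>u\<in>K. \<forall>v\<in>K. u \<noteq> v \<longrightarrow> G u v) \<and>
    (\<forall>u\<in>V - K. \<forall>v\<in>V - K. u \<noteq> v \<longrightarrow> \<not> G u v)"
proof -
  define below where "below w v \<longleftrightarrow> nbhd w - {v} \<subseteq> nbhd v - {w}" for w v
  define K where "K = {v \<in> V. \<exists>w \<in> V. w \<noteq> v \<and> G v w \<and> below w v}"
  have adj_if_below: "G x x'" if "x \<in> K" "x' \<in> V" "x \<noteq> x'" "below x x'" for x x'
  proof -
    obtain w where w: "w \<in> V" "w \<noteq> x" "G x w" "below w x"
      using \<open>x \<in> K\<close> by (auto simp: K_def)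
    show ?thesis
    proof (cases "w = x'")
      case False
      then have "w \<in> nbhd x' - {x}"
        using w \<open>below x x'\<close> unfolding below_def nbhd_def by blast
      then have "x' \<in> nbhd w - {x}"
        using that(2,3) sym unfolding nbhd_def by blast
      then show ?thesis using w(4) unfolding below_def nbhd_def by blast
    qed (use w in simp)
  qed
  have "K \<subseteq> V" by (auto simp: K_def)
  moreover have "G u v" if "u \<in> K" "v \<in> K" "u \<noteq> v" for u v
  proof -
    have "u \<in> V" "v \<in> V" using that by (auto simp: K_def)
    then have "below u v \<or> below v u" using nested that(3) unfolding below_def by blast
    then show ?thesis
    proof
      assume "below u v"
      then show ?thesis using adj_if_below that \<open>v \<in> V\<close> by blast
    next
      assume "below v u"
      then have "G v u" using adj_if_below that \<open>u \<in> V\<close> by blast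
      then show ?thesis using sym by simp
    qed
  qed
  moreover have "\<not> G u v" if "u \<in> V - K" "v \<in> V - K" "u \<noteq> v" for u v
  proof
    assume "G u v"
    have "u \<in> V" "v \<in> V" using that by auto
    have "G v u" using \<open>G u v\<close> sym by simp
    have "below u v \<or> below v u" using nested that unfolding below_def by blast
    then show False
    proof
      assume "below u v"
      then have "v \<in> K"
        using \<open>u \<in> V\<close> \<open>v \<in> V\<close> \<open>u \<noteq> v\<close> \<open>G v u\<close> unfolding K_def by blast
      then show False using that by blast
    next
      assume "below v u"
      then have "u \<in> K"
        using \<open>u \<in> V\<close> \<open>v \<in> V\<close> \<open>u \<noteq> v\<close>[symmetric] \<open>G u v\<close> unfolding K_def by blast
      then show False using that by blast
    qed
  qed
  ultimately show ?thesis by (intro exI[of _ K] conjI ballI impI) auto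
qed

lemma greedy_clique:
  fixes U :: "'a set" and P :: "'a \<Rightarrow> 'a \<Rightarrow> bool"
  assumes "finite U" and sym: "\<And>x y. P x y = P y x"
    and "\<And>u. u \<in> U \<Longrightarrow> card {z \<in> U. z \<noteq> u \<and> \<not> P u z} \<le> D"
  shows "\<exists>S\<subseteq>U. (\<forall>x\<in>S. \<forall>y\<in>S. x \<noteq> y \<longrightarrow> P x y) \<and> card U \<le> card S * (D + 1)"
  using assms(1,3)
proof (induction "card U" arbitrary: U rule: less_induct)
  case less
  show ?case
  proof (cases "U = {}")
    case False
    then obtain u where u: "u \<in> U" by blast
    define Bad where "Bad = insert u {z \<in> U. z \<noteq> u \<and> \<not> P u z}"
    define U' where "U' = U - Bad"
    have fin: "finite U'" "finite Bad" using less.prems(1) by (auto simp: U'_def Bad_def)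
    have smaller: "card U' < card U"
      using u less.prems(1) unfolding U'_def Bad_def by (intro psubset_card_mono) auto
    have "card {z \<in> U'. z \<noteq> v \<and> \<not> P v z} \<le> D" if "v \<in> U'" for v
    proof -
      have "card {z \<in> U'. z \<noteq> v \<and> \<not> P v z} \<le> card {z \<in> U. z \<noteq> v \<and> \<not> P v z}"
        using less.prems(1) unfolding U'_def by (intro card_mono) auto
      also have "\<dots> \<le> D" using less.prems(2) that unfolding U'_def by auto
      finally show ?thesis .
    qed
    then obtain S where S: "S \<subseteq> U'" "\<forall>x\<in>S. \<forall>y\<in>S. x \<noteq> y \<longrightarrow> P x y"
      "card U' \<le> card S * (D + 1)"
      using less.hyps[OF smaller fin(1)] by blast
    have "u \<notin> S" "finite S" using S(1) fin(1) finite_subset unfolding U'_def Bad_def by auto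
    have clique: "\<forall>x\<in>insert u S. \<forall>y\<in>insert u S. x \<noteq> y \<longrightarrow> P x y"
      using S(1,2) sym unfolding U'_def Bad_def by auto
    have "card Bad \<le> D + 1"
      using less.prems(2)[OF u] fin(2) unfolding Bad_def by (simp add: card_insert_if)
    moreover have "card U \<le> card (U' \<union> Bad)"
      using fin by (intro card_mono) (auto simp: U'_def)
    moreover have "card (U' \<union> Bad) \<le> card U' + card Bad" by (rule card_Un_le)
    moreover have "card (insert u S) * (D + 1) = card S * (D + 1) + (D + 1)"
      using \<open>u \<notin> S\<close> \<open>finite S\<close> by simp
    ultimately have "card U \<le> card (insert u S) * (D + 1)" using S(3) by linarith
    moreover have "insert u S \<subseteq> U" using S(1) u unfolding U'_def by blast
    ultimately show ?thesis using clique by blast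
  qed simp
qed

locale Q_free_3graph =
  fixes n :: nat and E :: "nat set set"
  assumes uniform: "uniform_hypergraph 3 {..<n} E"
    and Q_free: "Q_free {..<n} E {(4, 0), (4, 3)}"
begin

definition h :: nat where "h = hom_number 3 {..<n} E"

lemma edge_card: "e \<in> E \<Longrightarrow> card e = 3"
  and edge_vertex_lt: "e \<in> E \<Longrightarrow> x \<in> e \<Longrightarrow> x < n"
  using uniform by (auto simp: uniform_hypergraph_def)

lemma edges_in_4set:
  assumes "{a,b,c,d} \<subseteq> {..<n}" "distinct [a,b,c,d]"
  shows "{e \<in> E. e \<subseteq> {a,b,c,d}} = {f \<in> {{a,b,c},{a,b,d},{a,c,d},{b,c,d}}. f \<in> E}"
  using card3_subset_of_card4[OF _ _ assms(2)] edge_card by auto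

lemma card_edges_in_4set:
  assumes "S \<subseteq> {..<n}" "card S = 4"
  shows "card {e \<in> E. e \<subseteq> S} \<noteq> 0" and "card {e \<in> E. e \<subseteq> S} \<noteq> 3"
  using Q_free assms unfolding Q_free_def mf_free_def by auto

lemma edge_among_four:
  assumes "{a,b,c,d} \<subseteq> {..<n}" "distinct [a,b,c,d]"
  shows "{a,b,c} \<in> E \<or> {a,b,d} \<in> E \<or> {a,c,d} \<in> E \<or> {b,c,d} \<in> E"
proof -
  have "card {a,b,c,d} = 4" using assms(2) by simp
  then have "card {e \<in> E. e \<subseteq> {a,b,c,d}} \<noteq> 0"
    using card_edges_in_4set(1) assms(1) by blast
  then show ?thesis unfolding edges_in_4set[OF assms] by auto
qed

lemma fourth_edge:
  assumes "distinct [a,b,c,d]" "{a,b,c} \<in> E" "{a,b,d} \<in> E" "{a,c,d} \<in> E"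
  shows "{b,c,d} \<in> E"
proof (rule ccontr)
  assume "{b,c,d} \<notin> E"
  have "{a,b,c,d} \<subseteq> {..<n}" using assms(2,4) edge_vertex_lt by blast
  moreover have "card {a,b,c,d} = 4" using assms(1) by simp
  ultimately have "card {e \<in> E. e \<subseteq> {a,b,c,d}} \<noteq> 3"
    by (rule card_edges_in_4set(2))
  moreover have "{e \<in> E. e \<subseteq> {a,b,c,d}} = {{a,b,c},{a,b,d},{a,c,d}}"
    unfolding edges_in_4set[OF \<open>{a,b,c,d} \<subseteq> {..<n}\<close> assms(1)]
    using assms(2-4) \<open>{b,c,d} \<notin> E\<close> by auto
  moreover have "card {{a,b,c},{a,b,d},{a,c,d}} = 3"
  proof -
    have "d \<notin> {a,b,c}" "c \<notin> {a,b,d}" "b \<notin> {a,c,d}" using assms(1) by auto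
    then have "{a,b,c} \<noteq> {a,b,d}" "{a,b,c} \<noteq> {a,c,d}" "{a,b,d} \<noteq> {a,c,d}" by blast+
    then show ?thesis by simp
  qed
  ultimately show False by simp
qed

lemma edge_link_closed:
  assumes "distinct [p,u,v,w]" "{u,v,w} \<in> E" "{p,u,v} \<in> E" "{p,u,w} \<in> E"
  shows "{p,v,w} \<in> E"
proof -
  have "{u,p,v} \<in> E" "{u,p,w} \<in> E" using assms(3,4) by (simp_all add: insert_commute)
  then show ?thesis using fourth_edge[of u p v w] assms(1,2) by auto
qed

lemma link_transfer:
  assumes "distinct [u,v,w]" "p \<notin> {u,v,w}" "q \<notin> {u,v,w}"
    and "{p,u,v} \<in> E" "{p,u,w} \<in> E" "{p,v,w} \<in> E" "{q,u,v} \<in> E" "{q,u,w} \<in> E"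
  shows "{q,v,w} \<in> E"
proof -
  have "{u,v,w} \<in> E" using fourth_edge[of p u v w] assms by auto
  then show ?thesis using edge_link_closed[of q u v w] assms by auto
qed

lemma clique_card_le:
  assumes "T \<subseteq> {..<n}"
    and "\<And>x y z. x \<in> T \<Longrightarrow> y \<in> T \<Longrightarrow> z \<in> T \<Longrightarrow> distinct [x,y,z] \<Longrightarrow> {x,y,z} \<in> E"
  shows "card T \<le> h"
proof -
  have "homogeneous 3 E T"
    unfolding homogeneous_def
  proof (rule disjI1, intro allI impI)
    fix e assume "e \<subseteq> T \<and> card e = 3"
    then obtain x y z where "e = {x,y,z}" "distinct [x,y,z]" "x \<in> T" "y \<in> T" "z \<in> T"
      by (auto simp: card_3_iff)
    then show "e \<in> E" using assms(2) by blast
  qed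
  moreover have "finite {card S | S. S \<subseteq> {..<n} \<and> homogeneous 3 E S}"
    by (rule finite_subset[of _ "card ` Pow {..<n}"]) auto
  ultimately show ?thesis unfolding h_def hom_number_def using assms(1)
    by (intro Max_ge) auto
qed

lemma link_clique_card_less:
  assumes "p < n" "S \<subseteq> {..<n} - {p}"
    and link: "\<And>u v. u \<in> S \<Longrightarrow> v \<in> S \<Longrightarrow> u \<noteq> v \<Longrightarrow> {p,u,v} \<in> E"
  shows "card S < h"
proof -
  have "card (insert p S) \<le> h"
  proof (rule clique_card_le)
    show "insert p S \<subseteq> {..<n}" using assms(1,2) by auto
  next
    fix x y z assume xyz: "x \<in> insert p S" "y \<in> insert p S" "z \<in> insert p S" "distinct [x,y,z]"
    show "{x,y,z} \<in> E"
    proof (cases "p \<in> {x,y,z}")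
      case True
      then consider "x = p" | "y = p" | "z = p" by blast
      then show ?thesis
      proof cases
        case 1
        then show ?thesis using xyz link[of y z] by auto
      next
        case 2
        then have "{x,y,z} = {p,x,z}" by auto
        then show ?thesis using xyz 2 link[of x z] by auto
      next
        case 3
        then have "{x,y,z} = {p,x,y}" by auto
        then show ?thesis using xyz 3 link[of x y] by auto
      qed
    next
      case False
      then show ?thesis using fourth_edge[of p x y z] link xyz by auto
    qed
  qed
  moreover have "p \<notin> S" "finite S" using assms(2) finite_subset by auto
  ultimately show ?thesis by simp
qed

end

locale vertex_pair = Q_free_3graph +
  fixes a b :: nat
  assumes a_lt: "a < n" and b_lt: "b < n" and a_ne_b: "a \<noteq> b"
begin

definition Y :: "nat set" where "Y = {v. v < n \<and> v \<noteq> a \<and> v \<noteq> b \<and> {a,b,v} \<notin> E}"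
definition A :: "nat \<Rightarrow> nat \<Rightarrow> bool" where "A u v \<longleftrightarrow> {a,u,v} \<in> E"
definition B :: "nat \<Rightarrow> nat \<Rightarrow> bool" where "B u v \<longleftrightarrow> {b,u,v} \<in> E"
definition AB :: "nat \<Rightarrow> nat \<Rightarrow> bool" where "AB u v \<longleftrightarrow> A u v \<and> B u v"

lemma Y_memD: "v \<in> Y \<Longrightarrow> v < n \<and> v \<noteq> a \<and> v \<noteq> b"
  by (simp add: Y_def)

lemma finite_Y: "finite Y"
  by (simp add: Y_def)

lemma A_commute: "A u v = A v u" and B_commute: "B u v = B v u"
  by (simp_all add: A_def B_def insert_commute)

lemma AB_sym: "AB u v \<Longrightarrow> AB v u"
  by (simp add: AB_def A_commute B_commute)

lemma A_or_B: "u \<in> Y \<Longrightarrow> v \<in> Y \<Longrightarrow> u \<noteq> v \<Longrightarrow> A u v \<or> B u v"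
  using edge_among_four[of a b u v] a_lt b_lt a_ne_b by (auto simp: Y_def A_def B_def)

lemma AB_trans:
  assumes "u \<in> Y" "v \<in> Y" "w \<in> Y" "distinct [u,v,w]" "AB u v" "AB u w"
  shows "AB v w"
proof -
  have ab: "a \<notin> {u,v,w}" "b \<notin> {u,v,w}" using assms(1-3) Y_memD by auto
  have "A v w"
  proof (rule ccontr)
    assume "\<not> A v w"
    then have "B v w" using A_or_B assms(2-4) by auto
    then show False
      using link_transfer[of u v w b a] \<open>\<not> A v w\<close> ab assms(4-6) by (auto simp: AB_def A_def B_def)
  qed
  moreover have "B v w"
  proof (rule ccontr)
    assume "\<not> B v w"
    then have "A v w" using A_or_B assms(2-4) by auto
    then show False
      using link_transfer[of u v w a b] \<open>\<not> B v w\<close> ab assms(4-6) by (auto simp: AB_def A_def B_def)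
  qed
  ultimately show ?thesis by (simp add: AB_def)
qed

lemma A_clique_card_less:
  "S \<subseteq> Y \<Longrightarrow> (\<And>u v. u \<in> S \<Longrightarrow> v \<in> S \<Longrightarrow> u \<noteq> v \<Longrightarrow> A u v) \<Longrightarrow> card S < h"
  using link_clique_card_less[of a S] a_lt unfolding A_def Y_def by blast

lemma B_clique_card_less:
  "S \<subseteq> Y \<Longrightarrow> (\<And>u v. u \<in> S \<Longrightarrow> v \<in> S \<Longrightarrow> u \<noteq> v \<Longrightarrow> B u v) \<Longrightarrow> card S < h"
  using link_clique_card_less[of b S] b_lt unfolding B_def Y_def by blast

lemma AB_class_card_less:
  assumes "y \<in> Y"
  shows "card {z \<in> Y. z = y \<or> AB y z} < h"
proof (rule A_clique_card_less)
  fix u v assume uv: "u \<in> {z \<in> Y. z = y \<or> AB y z}" "v \<in> {z \<in> Y. z = y \<or> AB y z}"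
    "u \<noteq> v"
  consider "u = y" | "v = y" | "u \<noteq> y" "v \<noteq> y" by blast
  then show "A u v"
  proof cases
    case 1
    then show ?thesis using uv by (simp add: AB_def)
  next
    case 2
    then show ?thesis using uv A_commute[of u v] by (simp add: AB_def)
  next
    case 3
    then show ?thesis using AB_trans[of y u v] uv assms by (simp add: AB_def)
  qed
qed auto

context
  fixes T :: "nat set"
  assumes T_Y: "T \<subseteq> Y"
    and T_not_AB: "\<And>u v. u \<in> T \<Longrightarrow> v \<in> T \<Longrightarrow> u \<noteq> v \<Longrightarrow> \<not> AB u v"
begin

lemma B_iff_not_A: "u \<in> T \<Longrightarrow> v \<in> T \<Longrightarrow> u \<noteq> v \<Longrightarrow> B u v \<longleftrightarrow> \<not> A u v"
  using A_or_B T_not_AB T_Y unfolding AB_def by blast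

lemma edge_iff_A_constant:
  assumes "u \<in> T" "v \<in> T" "w \<in> T" "distinct [u,v,w]"
  shows "{u,v,w} \<in> E \<longleftrightarrow> (A u v \<longleftrightarrow> A u w) \<and> (A u v \<longleftrightarrow> A v w)"
proof -
  have Y: "u \<in> Y" "v \<in> Y" "w \<in> Y" using assms T_Y by auto
  then have ab: "distinct [a,u,v,w]" "distinct [b,u,v,w]" using assms(4) Y_memD by auto
  have closed: "A y z = A x y"
    if "{u,v,w} \<in> E" "{x,y,z} = {u,v,w}" "distinct [x,y,z]" "A x y = A x z" for x y z
  proof -
    have "{x,y,z} \<subseteq> T" unfolding that(2) using assms(1-3) by simp
    then have xyz: "x \<in> T" "y \<in> T" "z \<in> T" by simp_all
    have "distinct [a,x,y,z]" "distinct [b,x,y,z]" using xyz that(3) T_Y Y_memD by auto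
    moreover have "{x,y,z} \<in> E" using that(1,2) by simp
    ultimately show ?thesis
    proof (cases "A x y")
      case True
      then have "A x z" using that(4) by simp
      then show ?thesis
        using True edge_link_closed[of a x y z] \<open>{x,y,z} \<in> E\<close> \<open>distinct [a,x,y,z]\<close>
        unfolding A_def by simp
    next
      case False
      then have "B x y" "B x z" using that(3,4) xyz B_iff_not_A by auto
      then have "B y z"
        using edge_link_closed[of b x y z] \<open>{x,y,z} \<in> E\<close> \<open>distinct [b,x,y,z]\<close>
        unfolding B_def by simp
      then show ?thesis using False that(3) xyz B_iff_not_A by auto
    qed
  qed
  show ?thesis
  proof
    assume edge: "{u,v,w} \<in> E"
    have "{v,u,w} = {u,v,w}" "{w,u,v} = {u,v,w}" by auto
    moreover have "distinct [v,u,w]" "distinct [w,u,v]" using assms(4) by auto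
    ultimately have "A u v = A u w \<Longrightarrow> A v w = A u v"
      "A v u = A v w \<Longrightarrow> A u w = A v u" "A w u = A w v \<Longrightarrow> A u v = A w u"
      using closed[OF edge, of u v w] closed[OF edge, of v u w] closed[OF edge, of w u v]
        assms(4) by simp_all
    then show "(A u v \<longleftrightarrow> A u w) \<and> (A u v \<longleftrightarrow> A v w)"
      using A_commute[of u v] A_commute[of u w] A_commute[of v w] by blast
  next
    assume const: "(A u v \<longleftrightarrow> A u w) \<and> (A u v \<longleftrightarrow> A v w)"
    show "{u,v,w} \<in> E"
    proof (cases "A u v")
      case True
      then show ?thesis using fourth_edge[of a u v w] ab(1) const unfolding A_def by auto
    next
      case False
      then have "B u v" "B u w" "B v w" using const B_iff_not_A assms by auto
      then show ?thesis using fourth_edge[of b u v w] ab(2) unfolding B_def by auto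
    qed
  qed
qed

lemma A_no_alternating_4cycle:
  assumes "u \<in> T" "v \<in> T" "x \<in> T" "y \<in> T" "distinct [u,v,x,y]"
    and "A u x" "A v y" "\<not> A v x" "\<not> A u y"
  shows False
proof -
  have "{u,v,x,y} \<subseteq> {..<n}" using assms(1-4) T_Y Y_memD by auto
  then have "{u,v,x} \<in> E \<or> {u,v,y} \<in> E \<or> {u,x,y} \<in> E \<or> {v,x,y} \<in> E"
    using edge_among_four assms(5) by blast
  moreover have "distinct [u,v,x]" "distinct [u,v,y]" "distinct [u,x,y]" "distinct [v,x,y]"
    using assms(5) by auto
  then have "{u,v,x} \<notin> E" "{u,v,y} \<notin> E" "{u,x,y} \<notin> E" "{v,x,y} \<notin> E"
    using edge_iff_A_constant[of u v x] edge_iff_A_constant[of u v y]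
      edge_iff_A_constant[of u x y] edge_iff_A_constant[of v x y] assms(1-4,6-9)
    by simp_all
  ultimately show False by blast
qed

lemma pairwise_not_AB_card_le: "card T \<le> 2 * h"
proof -
  have nested: "{z \<in> T. z \<noteq> u \<and> A u z} - {v} \<subseteq> {z \<in> T. z \<noteq> v \<and> A v z} - {u} \<or>
      {z \<in> T. z \<noteq> v \<and> A v z} - {u} \<subseteq> {z \<in> T. z \<noteq> u \<and> A u z} - {v}"
    if "u \<in> T" "v \<in> T" "u \<noteq> v" for u v
    using A_no_alternating_4cycle that by (rule no_alternating_4cycle_imp_nested)
  have "\<exists>K\<subseteq>T. (\<forall>u\<in>K. \<forall>v\<in>K. u \<noteq> v \<longrightarrow> A u v) \<and>
      (\<forall>u\<in>T - K. \<forall>v\<in>T - K. u \<noteq> v \<longrightarrow> \<not> A u v)"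
    using A_commute nested by (rule nested_nbhds_imp_split)
  then obtain K where K: "K \<subseteq> T" "\<forall>u\<in>K. \<forall>v\<in>K. u \<noteq> v \<longrightarrow> A u v"
    "\<forall>u\<in>T - K. \<forall>v\<in>T - K. u \<noteq> v \<longrightarrow> \<not> A u v"
    by blast
  have "card K < h"
  proof (rule A_clique_card_less)
    show "K \<subseteq> Y" using K(1) T_Y by blast
    show "A u v" if "u \<in> K" "v \<in> K" "u \<noteq> v" for u v using K(2) that by blast
  qed
  moreover have "card (T - K) < h"
  proof (rule B_clique_card_less)
    show "T - K \<subseteq> Y" using T_Y by blast
    show "B u v" if "u \<in> T - K" "v \<in> T - K" "u \<noteq> v" for u v
      using K(3) B_iff_not_A[of u v] that by simp
  qed
  moreover have "card T \<le> card K + card (T - K)"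
    using card_Un_le[of K "T - K"] K(1) by (simp add: Un_absorb1)
  ultimately show ?thesis by linarith
qed

end

lemma card_Y_le: "card Y \<le> 2 * h * h"
proof -
  have "\<exists>T\<subseteq>Y. Y \<subseteq> (\<Union>t\<in>T. {z \<in> Y. z = t \<or> AB t z}) \<and>
      (\<forall>u\<in>T. \<forall>v\<in>T. u \<noteq> v \<longrightarrow> \<not> AB u v)"
    using finite_Y AB_sym AB_trans by (rule class_representatives)
  then obtain T where T: "T \<subseteq> Y" "Y \<subseteq> (\<Union>t\<in>T. {z \<in> Y. z = t \<or> AB t z})"
    "\<forall>u\<in>T. \<forall>v\<in>T. u \<noteq> v \<longrightarrow> \<not> AB u v"
    by blast
  have "finite T" using T(1) finite_Y finite_subset by blast
  have "card Y \<le> card (\<Union>t\<in>T. {z \<in> Y. z = t \<or> AB t z})"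
    using T(2) \<open>finite T\<close> finite_Y by (intro card_mono) auto
  also have "\<dots> \<le> (\<Sum>t\<in>T. card {z \<in> Y. z = t \<or> AB t z})"
    by (rule card_UN_le[OF \<open>finite T\<close>])
  also have "\<dots> \<le> card T * h"
  proof -
    have "card {z \<in> Y. z = t \<or> AB t z} \<le> h" if "t \<in> T" for t
      using AB_class_card_less[of t] that T(1) by auto
    then show ?thesis using sum_bounded_above[of T "\<lambda>t. card {z \<in> Y. z = t \<or> AB t z}" h] by simp
  qed
  also have "\<dots> \<le> 2 * h * h"
  proof -
    have "card T \<le> 2 * h" using T(3) by (intro pairwise_not_AB_card_le[OF T(1)]) blast
    then show ?thesis by simp
  qed
  finally show ?thesis .
qed

end

context Q_free_3graph
begin

lemma non_link_card_le:
  assumes "a < n" "b < n" "a \<noteq> b"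
  shows "card {v. v < n \<and> v \<noteq> a \<and> v \<noteq> b \<and> {a,b,v} \<notin> E} \<le> 2 * h * h"
proof -
  interpret vertex_pair n E a b by unfold_locales (use assms in auto)
  show ?thesis using card_Y_le unfolding Y_def .
qed

lemma card_le_2_h_cube:
  assumes "n > 0"
  shows "n \<le> 2 * h ^ 3"
proof -
  define U where "U = {1..<n}"
  have non_link: "card {z \<in> U. z \<noteq> y \<and> {0,y,z} \<notin> E} \<le> 2 * h * h" if "y \<in> U" for y
  proof -
    have "card {z \<in> U. z \<noteq> y \<and> {0,y,z} \<notin> E}
        \<le> card {v. v < n \<and> v \<noteq> 0 \<and> v \<noteq> y \<and> {0,y,v} \<notin> E}"
      by (intro card_mono) (auto simp: U_def)
    also have "\<dots> \<le> 2 * h * h" using non_link_card_le[of 0 y] that assms by (auto simp: U_def)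
    finally show ?thesis .
  qed
  have "\<exists>S\<subseteq>U. (\<forall>x\<in>S. \<forall>y\<in>S. x \<noteq> y \<longrightarrow> {0,x,y} \<in> E) \<and> card U \<le> card S * (2 * h * h + 1)"
    by (rule greedy_clique) (use non_link in \<open>auto simp: U_def insert_commute\<close>)
  then obtain S where S: "S \<subseteq> U" "\<forall>x\<in>S. \<forall>y\<in>S. x \<noteq> y \<longrightarrow> {0,x,y} \<in> E"
      "card U \<le> card S * (2 * h * h + 1)"
    by blast
  have "card S < h" using S(1,2) assms by (intro link_clique_card_less) (auto simp: U_def)
  then have "card S * (2 * h * h + 1) \<le> (h - 1) * (2 * h * h + 1)"
    by (intro mult_le_mono1) simp
  then have "n - 1 \<le> (h - 1) * (2 * h * h + 1)"
    using S(3) by (simp add: U_def)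
  then show ?thesis
    using \<open>card S < h\<close> by (cases h) (simp_all add: power3_eq_cube algebra_simps)
qed

end

lemma cube_root_bound:
  fixes n k :: nat
  assumes "n \<le> 2 * k ^ 3"
  shows "real n powr (1/3) \<le> 2 * real k"
proof -
  have "real n \<le> real (2 * k ^ 3)" using assms by (simp only: of_nat_le_iff)
  then have "real n powr (1/3) \<le> real (2 * k ^ 3) powr (1/3)"
    by (intro powr_mono2) simp_all
  also have "real (2 * k ^ 3) = 2 * real k powr 3" by simp
  also have "(2 * real k powr 3) powr (1/3) = 2 powr (1/3) * real k"
  proof -
    have "(real k powr 3) powr (1/3) = real k powr (3 * (1/3))" by (rule powr_powr)
    then have "(real k powr 3) powr (1/3) = real k" by simp
    then show ?thesis by (simp only: powr_mult)
  qed
  also have "\<dots> \<le> 2 * real k"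
    using powr_mono[of "1/3" 1 "2::real"] by (intro mult_right_mono) simp_all
  finally show ?thesis .
qed

lemma complete_3graph_Q_free:
  fixes n :: nat
  shows "Q_free {..<n} {e. e \<subseteq> {..<n} \<and> card e = 3} {(4, 0), (4, 3)}"
proof -
  have "card {e \<in> {e. e \<subseteq> {..<n} \<and> card e = 3}. e \<subseteq> S} = 4"
    if "S \<subseteq> {..<n}" "card S = 4" for S :: "nat set"
  proof -
    have "{e \<in> {e. e \<subseteq> {..<n} \<and> card e = 3}. e \<subseteq> S} = {e. e \<subseteq> S \<and> card e = 3}"
      using that(1) by auto
    moreover have "finite S" using that(2) card.infinite by fastforce
    ultimately show ?thesis using n_subsets[of S 3] that(2) by (simp add: numeral_eq_Suc)
  qed
  then show ?thesis unfolding Q_free_def mf_free_def by auto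
qed

lemma h_num_attained:
  "\<exists>E. uniform_hypergraph 3 {..<n} E \<and> Q_free {..<n} E {(4, 0), (4, 3)} \<and>
     h_num 3 n {(4, 0), (4, 3)} = hom_number 3 {..<n} E"
proof -
  let ?G = "{E. uniform_hypergraph 3 {..<n} E \<and> Q_free {..<n} E {(4, 0), (4, 3)}}"
  have "?G \<subseteq> Pow (Pow {..<n})" by (auto simp: uniform_hypergraph_def)
  then have "finite (hom_number 3 {..<n} ` ?G)"
    by (meson finite_Pow_iff finite_imageI finite_lessThan finite_subset)
  moreover have "{e. e \<subseteq> {..<n} \<and> card e = 3} \<in> ?G"
    using complete_3graph_Q_free by (simp add: uniform_hypergraph_def)
  ultimately have "Min (hom_number 3 {..<n} ` ?G) \<in> hom_number 3 {..<n} ` ?G"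
    by (intro Min_in) auto
  moreover have "h_num 3 n {(4, 0), (4, 3)} = Min (hom_number 3 {..<n} ` ?G)"
    unfolding h_num_def by (rule arg_cong[of _ _ Min]) blast
  ultimately have "h_num 3 n {(4, 0), (4, 3)} \<in> hom_number 3 {..<n} ` ?G" by simp
  then show ?thesis by auto
qed

theorem mainTheorem5:
  shows "\<exists>c1::real. c1 > 0 \<and>
    (\<forall>n::nat. n > 5 \<longrightarrow> real (h_num 3 n {(4, 0), (4, 3)}) > c1 * real n powr (1/3))"
proof (intro exI[of _ "1/4"] conjI allI impI)
  fix n :: nat assume "n > 5"
  obtain E where E: "uniform_hypergraph 3 {..<n} E" "Q_free {..<n} E {(4, 0), (4, 3)}"
    and h: "h_num 3 n {(4, 0), (4, 3)} = hom_number 3 {..<n} E"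
    using h_num_attained by blast
  interpret Q_free_3graph n E using E by unfold_locales
  have "real n powr (1/3) \<le> 2 * real h"
    using card_le_2_h_cube \<open>n > 5\<close> by (intro cube_root_bound) simp
  moreover have "h > 0" using card_le_2_h_cube \<open>n > 5\<close> by (cases h) auto
  ultimately show "real (h_num 3 n {(4, 0), (4, 3)}) > 1/4 * real n powr (1/3)"
    using h by (simp add: h_def)
qed (simp)

end
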